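(* Let $\hat{c}_1,\dots,\hat{c}_n$ be Majorana operators, i.e. $\hat{c}_i^\dagger=\hat{c}_i$ and $\{\hat{c}_i,\hat{c}_j\}=2\delta_{ij}$, and let $$\hat{H}=\sum_{i<j}t_{ij}\,i\,\hat{c}_i\hat{c}_j+\sum_{i<j<k<l}U_{ijkl}\,\hat{c}_i\hat{c}_j\hat{c}_k\hat{c}_l,$$ where $t_{ij}$ and $U_{ijkl}$ are real and are extended to all index tuples as totally antisymmetric arrays. For fixed $m$, let $(c_{im}(t))_{i}$ be the solution of $$\dot{c}_{im}(t)=2\sum_{\substack{j<k<l}}|U_{ijkl}|\,[c_{jm}(t)+c_{km}(t)+c_{lm}(t)]+2\sum_j|t_{ij}|\,c_{jm}(t),\qquad c_{im}(0)=2\delta_{im},$$ where the first sum runs over triples $j<k<l$ of indices (all different from $i$). Then for all $t\ge 0$ and all $i,m$, $$\|\{\hat{c}_i(t),\hat{c}_m\}\|\le c_{im}(t),$$ where $\hat{c}_i(t)=e^{i\hat{H}t}\hat{c}_ie^{-i\hat{H}t}$ and $\|\cdot\|$ is the operator norm.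
   Context: $\{\cdot,\cdot\}$ denotes the anticommutator. *)

theory Defs
  imports "HOL-Analysis.Analysis"
begin

text \<open>Operators on a finite-dimensional complex Hilbert space complex^'d are
  represented by complex matrices complex^'d^'d.\<close>

definition cadj :: "complex^'d^'d \<Rightarrow> complex^'d^'d" where
  "cadj A = (\<chi> i j. cnj (A $ j $ i))"

definition msc :: "complex \<Rightarrow> complex^'d^'d \<Rightarrow> complex^'d^'d" where
  "msc a A = (\<chi> i j. a * A $ i $ j)"

definition mpow :: "complex^'d^'d \<Rightarrow> nat \<Rightarrow> complex^'d^'d" where
  "mpow A k = (((**) A) ^^ k) (mat 1)"

definition mexp :: "complex^'d^'d \<Rightarrow> complex^'d^'d" where
  "mexp A = (\<Sum>k. (1 / fact k) *\<^sub>R mpow A k)"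

definition opnorm :: "complex^'d^'d \<Rightarrow> real" where
  "opnorm A = onorm (\<lambda>x. A *v x)"

definition anticomm :: "complex^'d^'d \<Rightarrow> complex^'d^'d \<Rightarrow> complex^'d^'d" where
  "anticomm A B = A ** B + B ** A"

definition majorana :: "nat \<Rightarrow> (nat \<Rightarrow> complex^'d^'d) \<Rightarrow> bool" where
  "majorana n c \<longleftrightarrow> (\<forall>i<n. cadj (c i) = c i) \<and>
     (\<forall>i<n. \<forall>j<n. anticomm (c i) (c j) = (if i = j then mat 2 else 0))"

definition hamiltonian :: "nat \<Rightarrow> (nat \<Rightarrow> complex^'d^'d) \<Rightarrow> (nat \<Rightarrow> nat \<Rightarrow> real)
     \<Rightarrow> (nat \<Rightarrow> nat \<Rightarrow> nat \<Rightarrow> nat \<Rightarrow> real) \<Rightarrow> complex^'d^'d" where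
  "hamiltonian n c t U =
     (\<Sum>(i,j)\<in>{(i,j). i < j \<and> j < n}. msc (complex_of_real (t i j) * \<i>) (c i ** c j))
   + (\<Sum>(i,j,k,l)\<in>{(i,j,k,l). i < j \<and> j < k \<and> k < l \<and> l < n}.
        msc (complex_of_real (U i j k l)) (c i ** c j ** c k ** c l))"

definition heis :: "complex^'d^'d \<Rightarrow> real \<Rightarrow> complex^'d^'d \<Rightarrow> complex^'d^'d" where
  "heis H s A = mexp (msc (\<i> * complex_of_real s) H) ** A ** mexp (msc (- \<i> * complex_of_real s) H)"

definition antisym2 :: "(nat \<Rightarrow> nat \<Rightarrow> real) \<Rightarrow> bool" where
  "antisym2 t \<longleftrightarrow> (\<forall>i j. t i j = - t j i)"

definition antisym4 :: "(nat \<Rightarrow> nat \<Rightarrow> nat \<Rightarrow> nat \<Rightarrow> real) \<Rightarrow> bool" where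
  "antisym4 U \<longleftrightarrow> (\<forall>i j k l. U i j k l = - U j i k l \<and> U i j k l = - U i k j l
      \<and> U i j k l = - U i j l k)"

end

theory Submission
  imports Defs
begin

text \<open>
  Work in the real Banach algebra of bounded operators on \<open>complex^'d\<close>: there the matrix
  exponential is \<open>exp\<close>, and multiplication by \<open>i\<close> is an operator commuting with all matrices.
  The Hamiltonian is self-adjoint, so \<open>e\<^sup>i\<^sup>H\<^sup>s\<close> is isometric and the Heisenberg evolution
  \<open>Z \<mapsto> Z(s)\<close> is multiplicative with \<open>\<parallel>c\<^sub>j(s)\<parallel> \<le> 1\<close>. Let \<open>X\<^sub>i(s) = {c\<^sub>i(s), c\<^sub>m}\<close>; its derivative
  is \<open>{[iH, c\<^sub>i](s), c\<^sub>m}\<close>. By the anticommutation relations, \<open>[c\<^sub>a c\<^sub>b, c\<^sub>i]\<close> and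
  \<open>[c\<^sub>a c\<^sub>b c\<^sub>c c\<^sub>d, c\<^sub>i]\<close> are twice a product of the remaining one or three Majoranas, and
  \<open>{abc, m} = ab{c,m} - a{b,m}c + {a,m}bc\<close> with \<open>\<parallel>a\<parallel>, \<parallel>b\<parallel>, \<parallel>c\<parallel> \<le> 1\<close> bounds such a term by a sum of
  \<open>\<parallel>X\<^sub>j\<parallel>\<close>. Hence \<open>\<parallel>X\<^sub>i'\<parallel> \<le> F(\<parallel>X\<parallel>)\<^sub>i\<close> for the monotone right-hand side \<open>F\<close> of the ODE, and
  comparing \<open>\<parallel>X\<parallel>\<close> with \<open>c + \<epsilon> e\<^sup>B\<^sup>s\<close> at the first time they could meet gives \<open>\<parallel>X\<^sub>i\<parallel> \<le> c\<^sub>i\<close>.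
\<close>

section \<open>Bounded operators on \<open>complex^'d\<close> as a real Banach algebra\<close>

text \<open>A copy of \<open>blinfun\<close>, which the library does not make an algebra under composition.\<close>
typedef (overloaded) ('d::finite) endo = "UNIV :: ((complex^'d) \<Rightarrow>\<^sub>L (complex^'d)) set"
  morphisms endo_blinfun Endo by auto

setup_lifting type_definition_endo

instantiation endo :: (finite) real_normed_vector
begin
lift_definition norm_endo :: "'a endo \<Rightarrow> real" is norm .
lift_definition minus_endo :: "'a endo \<Rightarrow> 'a endo \<Rightarrow> 'a endo" is "(-)" .
lift_definition plus_endo :: "'a endo \<Rightarrow> 'a endo \<Rightarrow> 'a endo" is "(+)" .
lift_definition uminus_endo :: "'a endo \<Rightarrow> 'a endo" is "uminus" .
lift_definition zero_endo :: "'a endo" is "0" .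
lift_definition scaleR_endo :: "real \<Rightarrow> 'a endo \<Rightarrow> 'a endo" is "scaleR" .
definition dist_endo :: "'a endo \<Rightarrow> 'a endo \<Rightarrow> real" where "dist_endo a b = norm (a - b)"
definition sgn_endo :: "'a endo \<Rightarrow> 'a endo" where "sgn_endo x = scaleR (inverse (norm x)) x"
definition uniformity_endo :: "('a endo \<times> 'a endo) filter" where
  "uniformity_endo = (INF e\<in>{0 <..}. principal {(x, y). dist x y < e})"
definition open_endo :: "'a endo set \<Rightarrow> bool" where
  "open_endo S = (\<forall>x\<in>S. \<forall>\<^sub>F (x', y) in uniformity. x' = x \<longrightarrow> y \<in> S)"
instance
  apply standard
  unfolding dist_endo_def open_endo_def sgn_endo_def uniformity_endo_def
  apply (rule refl | (transfer, force simp: norm_triangle_ineq algebra_simps))+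
  done
end

instantiation endo :: (finite) real_normed_algebra_1
begin
lift_definition times_endo :: "'a endo \<Rightarrow> 'a endo \<Rightarrow> 'a endo" is "blinfun_compose" .
lift_definition one_endo :: "'a endo" is "id_blinfun" .
instance
proof
  show "(0::'a endo) \<noteq> 1"
  proof
    assume "(0::'a endo) = 1"
    then have "norm (0::'a endo) = norm (1::'a endo)" by simp
    then show False by transfer simp
  qed
qed (transfer; auto intro!: blinfun_eqI simp: blinfun.bilinear_simps norm_blinfun_compose)+
end

instance endo :: (finite) banach
proof
  fix X :: "nat \<Rightarrow> 'a endo"
  assume "Cauchy X"
  then have "Cauchy (\<lambda>n. endo_blinfun (X n))"
    unfolding Cauchy_def dist_endo_def dist_norm by transfer
  then obtain L where "(\<lambda>n. endo_blinfun (X n)) \<longlonglongrightarrow> L"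
    using Cauchy_convergent_iff convergent_def by blast
  then have "X \<longlonglongrightarrow> Endo L"
    unfolding LIMSEQ_def dist_endo_def dist_norm
    by (simp add: minus_endo.rep_eq norm_endo.rep_eq Endo_inverse)
  then show "convergent X" by (auto simp: convergent_def)
qed

definition endo_apply :: "'d::finite endo \<Rightarrow> complex^'d \<Rightarrow> complex^'d" where
  "endo_apply A v = blinfun_apply (endo_blinfun A) v"

lemma endo_apply_mult [simp]: "endo_apply (A * B) v = endo_apply A (endo_apply B v)"
  unfolding endo_apply_def by (simp add: times_endo.rep_eq)

lemma endo_apply_add [simp]: "endo_apply (A + B) v = endo_apply A v + endo_apply B v"
  unfolding endo_apply_def by (simp add: plus_endo.rep_eq blinfun.bilinear_simps)

lemma endo_apply_uminus [simp]: "endo_apply (- A) v = - endo_apply A v"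
  unfolding endo_apply_def by (simp add: uminus_endo.rep_eq blinfun.bilinear_simps)

lemma endo_apply_scaleR [simp]: "endo_apply (r *\<^sub>R A) v = r *\<^sub>R endo_apply A v"
  unfolding endo_apply_def by (simp add: scaleR_endo.rep_eq blinfun.bilinear_simps)

lemma endo_apply_zero [simp]: "endo_apply 0 v = 0"
  unfolding endo_apply_def by (simp add: zero_endo.rep_eq)

lemma endo_apply_one [simp]: "endo_apply 1 v = v"
  unfolding endo_apply_def by (simp add: one_endo.rep_eq)

lemma endo_eqI: "(\<And>v. endo_apply A v = endo_apply B v) \<Longrightarrow> A = B"
  unfolding endo_apply_def by (metis endo_blinfun_inject blinfun_eqI)

lemma norm_endo_apply_le: "norm (endo_apply A v) \<le> norm A * norm v"
  unfolding endo_apply_def by (simp add: norm_endo.rep_eq norm_blinfun)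

lemma norm_endo_le: "0 \<le> b \<Longrightarrow> (\<And>v. norm (endo_apply A v) \<le> b * norm v) \<Longrightarrow> norm A \<le> b"
  unfolding endo_apply_def norm_endo.rep_eq by (rule norm_blinfun_bound)

lemma bounded_linear_endo_apply_left: "bounded_linear (\<lambda>A. endo_apply A v)"
proof
  show "\<exists>K. \<forall>A. norm (endo_apply A v) \<le> norm A * K"
    using norm_endo_apply_le by blast
qed simp_all

definition endo_of_matrix :: "complex^'d^'d \<Rightarrow> 'd::finite endo" where
  "endo_of_matrix A = Endo (Blinfun (\<lambda>x. A *v x))"

lemma endo_apply_of_matrix [simp]: "endo_apply (endo_of_matrix A) v = A *v v"
  unfolding endo_apply_def endo_of_matrix_def
  by (simp add: Endo_inverse bounded_linear_Blinfun_apply)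

lemma endo_of_matrix_mult: "endo_of_matrix (A ** B) = endo_of_matrix A * endo_of_matrix B"
  by (rule endo_eqI) (simp add: matrix_vector_mul_assoc)

lemma endo_of_matrix_one: "endo_of_matrix (mat 1) = 1"
  by (rule endo_eqI) simp

lemma endo_of_matrix_add: "endo_of_matrix (A + B) = endo_of_matrix A + endo_of_matrix B"
  by (rule endo_eqI) (simp add: matrix_vector_mult_add_rdistrib)

lemma endo_of_matrix_scaleR: "endo_of_matrix (r *\<^sub>R A) = r *\<^sub>R endo_of_matrix A"
  by (rule endo_eqI)
    (simp add: vec_eq_iff matrix_vector_mult_def scaleR_sum_right mult_scaleR_left)

lemma endo_of_matrix_zero: "endo_of_matrix 0 = 0"
  using endo_of_matrix_scaleR[of 0 0] by simp

lemma endo_of_matrix_sum: "endo_of_matrix (sum f S) = (\<Sum>x\<in>S. endo_of_matrix (f x))"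
  by (induction S rule: infinite_finite_induct) (auto simp: endo_of_matrix_zero endo_of_matrix_add)

lemma endo_of_matrix_mat2: "endo_of_matrix (mat 2 :: complex^'d::finite^'d) = 2"
proof -
  have "mat 2 = (mat 1 + mat 1 :: complex^'d^'d)" by (simp add: vec_eq_iff mat_def)
  then show ?thesis by (simp only: endo_of_matrix_add endo_of_matrix_one one_add_one)
qed

lemma bounded_linear_endo_of_matrix: "bounded_linear endo_of_matrix"
  using linear_conv_bounded_linear linearI endo_of_matrix_add endo_of_matrix_scaleR by metis

lemma opnorm_eq_norm_endo_of_matrix: "opnorm A = norm (endo_of_matrix A)"
  unfolding opnorm_def endo_of_matrix_def norm_endo.rep_eq
  by (simp add: Endo_inverse norm_blinfun.rep_eq bounded_linear_Blinfun_apply)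

definition matrix_of_endo :: "'d::finite endo \<Rightarrow> complex^'d^'d" where
  "matrix_of_endo A = (\<chi> i j. endo_apply A (axis j 1) $ i)"

lemma matrix_of_endo_of_matrix: "matrix_of_endo (endo_of_matrix A) = A"
proof -
  have "(A *v axis j 1) $ i = A $ i $ j" for i j
    unfolding matrix_vector_mult_def axis_def
    by (simp add: if_distrib[where f="\<lambda>x. _ * x"] sum.delta' cong: if_cong)
  then show ?thesis unfolding matrix_of_endo_def by (simp add: vec_eq_iff)
qed

lemma bounded_linear_matrix_of_endo: "bounded_linear (matrix_of_endo :: 'd::finite endo \<Rightarrow> _)"
proof (rule bounded_linear_intro)
  show "matrix_of_endo (A + B) = matrix_of_endo A + matrix_of_endo B" for A B :: "'d endo"
    unfolding matrix_of_endo_def by (simp add: vec_eq_iff)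
  show "matrix_of_endo (r *\<^sub>R A) = r *\<^sub>R matrix_of_endo A" for r and A :: "'d endo"
    unfolding matrix_of_endo_def by (simp add: vec_eq_iff)
  have norm_vec_le: "norm x \<le> (\<Sum>i\<in>UNIV. norm (x $ i))" for x :: "'a::real_normed_vector^'d"
    by (simp add: norm_vec_def L2_set_le_sum)
  show "norm (matrix_of_endo A) \<le> norm A * of_nat (CARD('d) * CARD('d))" for A :: "'d endo"
  proof -
    have "norm (matrix_of_endo A) \<le> (\<Sum>i\<in>UNIV. \<Sum>j\<in>UNIV. norm (matrix_of_endo A $ i $ j))"
      using norm_vec_le[of "matrix_of_endo A"] norm_vec_le[of "matrix_of_endo A $ _"]
      by (meson order_trans sum_mono)
    also have "\<dots> \<le> (\<Sum>i\<in>(UNIV::'d set). \<Sum>j\<in>(UNIV::'d set). norm A)"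
    proof (intro sum_mono)
      fix i j :: 'd
      have "norm (matrix_of_endo A $ i $ j) \<le> norm (endo_apply A (axis j 1))"
        unfolding matrix_of_endo_def by (simp add: Finite_Cartesian_Product.norm_nth_le)
      also have "\<dots> \<le> norm A"
        using norm_endo_apply_le[of A "axis j 1"] by simp
      finally show "norm (matrix_of_endo A $ i $ j) \<le> norm A" .
    qed
    finally show ?thesis by (simp add: ac_simps)
  qed
qed

lemma endo_of_matrix_mpow: "endo_of_matrix (mpow A k) = endo_of_matrix A ^ k"
  by (induction k) (simp_all add: mpow_def endo_of_matrix_one endo_of_matrix_mult)

text \<open>The matrix series converges because the bounded left inverse \<open>matrix_of_endo\<close> of
  \<open>endo_of_matrix\<close> maps the operator exponential series onto it.\<close>
lemma endo_of_matrix_mexp: "endo_of_matrix (mexp A) = exp (endo_of_matrix A)"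
proof -
  have exp_sums: "(\<lambda>k. endo_of_matrix A ^ k /\<^sub>R fact k) sums exp (endo_of_matrix A)"
    unfolding exp_def by (rule summable_sums[OF summable_exp_generic])
  have terms: "(1 / fact k) *\<^sub>R mpow A k = matrix_of_endo (endo_of_matrix A ^ k /\<^sub>R fact k)" for k
    by (simp add: linear_scale[OF bounded_linear.linear[OF bounded_linear_matrix_of_endo]]
        matrix_of_endo_of_matrix divide_inverse flip: endo_of_matrix_mpow)
  have "(\<lambda>k. (1 / fact k) *\<^sub>R mpow A k) sums matrix_of_endo (exp (endo_of_matrix A))"
    unfolding terms by (rule bounded_linear.sums[OF bounded_linear_matrix_of_endo exp_sums])
  then have "(\<lambda>k. endo_of_matrix ((1 / fact k) *\<^sub>R mpow A k)) sums endo_of_matrix (mexp A)"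
    unfolding mexp_def by (intro bounded_linear.sums[OF bounded_linear_endo_of_matrix] summable_sums sums_summable)
  moreover have "(\<lambda>k. endo_of_matrix ((1 / fact k) *\<^sub>R mpow A k)) sums exp (endo_of_matrix A)"
    using exp_sums by (simp add: endo_of_matrix_scaleR endo_of_matrix_mpow divide_inverse_commute)
  ultimately show ?thesis using sums_unique2 by blast
qed

lemma msc_mult: "msc (a * b) A = msc a (msc b A)"
  by (simp add: msc_def vec_eq_iff mult.assoc)

lemma endo_of_matrix_msc_of_real: "endo_of_matrix (msc (complex_of_real r) A) = r *\<^sub>R endo_of_matrix A"
proof -
  have "r *\<^sub>R z = complex_of_real r * z" for z by (simp add: scaleR_conv_of_real)
  then show ?thesis
    by (intro endo_eqI) (simp add: msc_def vec_eq_iff matrix_vector_mult_def sum_distrib_left mult.assoc)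
qed

text \<open>Multiplication by \<open>i\<close>: the operators form only a real algebra.\<close>
definition imag_unit :: "'d::finite endo" where
  "imag_unit = endo_of_matrix (msc \<i> (mat 1))"

lemma endo_apply_imag_unit: "endo_apply imag_unit v = (\<chi> k. \<i> * v $ k)"
  by (simp add: imag_unit_def msc_def vec_eq_iff matrix_vector_mult_def mat_def
      mult.assoc if_distrib[where f="\<lambda>x. x * _"] sum_distrib_left[symmetric] cong: if_cong)

lemma endo_of_matrix_msc_imag: "endo_of_matrix (msc \<i> A) = imag_unit * endo_of_matrix A"
  by (rule endo_eqI)
    (simp add: endo_apply_imag_unit msc_def vec_eq_iff matrix_vector_mult_def sum_distrib_left mult.assoc)

lemma imag_unit_commute_endo_of_matrix: "imag_unit * endo_of_matrix A = endo_of_matrix A * imag_unit"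
  by (rule endo_eqI)
    (simp add: endo_apply_imag_unit vec_eq_iff matrix_vector_mult_def sum_distrib_left mult.left_commute)

lemma imag_unit_squared: "imag_unit * imag_unit = - 1"
  by (rule endo_eqI) (simp add: endo_apply_imag_unit vec_eq_iff)

lemma endo_of_matrix_heis:
  "endo_of_matrix (heis H s A) =
     exp (s *\<^sub>R (imag_unit * endo_of_matrix H)) * endo_of_matrix A * exp ((- s) *\<^sub>R (imag_unit * endo_of_matrix H))"
proof -
  have "\<i> * complex_of_real s = complex_of_real s * \<i>" "- \<i> * complex_of_real s = complex_of_real (- s) * \<i>"
    by simp_all
  then show ?thesis
    unfolding heis_def endo_of_matrix_mult endo_of_matrix_mexp
    by (simp only: msc_mult endo_of_matrix_msc_of_real endo_of_matrix_msc_imag)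
qed

definition has_adjoint :: "'d::finite endo \<Rightarrow> 'd endo \<Rightarrow> bool" where
  "has_adjoint A B \<longleftrightarrow> (\<forall>v w. inner (endo_apply A v) w = inner v (endo_apply B w))"

lemma inner_matrix_vector_mult: "inner (A *v v) w = inner v (cadj A *v w)"
proof -
  have cnj_mult: "inner (a * b) c = inner b (cnj a * c)" for a b c :: complex
    by (simp add: inner_complex_def algebra_simps)
  have "inner (A *v v) w = (\<Sum>i\<in>UNIV. \<Sum>j\<in>UNIV. inner (v $ j) (cnj (A $ i $ j) * w $ i))"
    by (simp add: inner_vec_def matrix_vector_mult_def inner_sum_left cnj_mult)
  also have "\<dots> = (\<Sum>j\<in>UNIV. \<Sum>i\<in>UNIV. inner (v $ j) (cnj (A $ i $ j) * w $ i))"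
    by (rule sum.swap)
  also have "\<dots> = inner v (cadj A *v w)"
    by (simp add: inner_vec_def matrix_vector_mult_def cadj_def inner_sum_right)
  finally show ?thesis .
qed

lemma has_adjoint_endo_of_matrix: "has_adjoint (endo_of_matrix A) (endo_of_matrix (cadj A))"
  unfolding has_adjoint_def by (simp add: inner_matrix_vector_mult)

lemma has_adjoint_mult: "has_adjoint A A' \<Longrightarrow> has_adjoint B B' \<Longrightarrow> has_adjoint (A * B) (B' * A')"
  unfolding has_adjoint_def by simp

lemma has_adjoint_add: "has_adjoint A A' \<Longrightarrow> has_adjoint B B' \<Longrightarrow> has_adjoint (A + B) (A' + B')"
  unfolding has_adjoint_def by (simp add: inner_add_left inner_add_right)

lemma has_adjoint_scaleR: "has_adjoint A A' \<Longrightarrow> has_adjoint (r *\<^sub>R A) (r *\<^sub>R A')"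
  unfolding has_adjoint_def by simp

lemma has_adjoint_zero: "has_adjoint 0 0"
  unfolding has_adjoint_def by simp

lemma has_adjoint_sum:
  "(\<And>x. x \<in> S \<Longrightarrow> has_adjoint (f x) (g x)) \<Longrightarrow> has_adjoint (sum f S) (sum g S)"
  by (induction S rule: infinite_finite_induct) (auto intro: has_adjoint_add simp: has_adjoint_zero)

lemma has_adjoint_imag_unit: "has_adjoint imag_unit (- imag_unit)"
  unfolding has_adjoint_def
  by (simp add: endo_apply_imag_unit inner_vec_def inner_complex_def sum_negf[symmetric] algebra_simps)

definition isometric :: "'d::finite endo \<Rightarrow> bool" where
  "isometric A \<longleftrightarrow> (\<forall>v. norm (endo_apply A v) = norm v)"

lemma isometric_mult: "isometric A \<Longrightarrow> isometric B \<Longrightarrow> isometric (A * B)"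
  unfolding isometric_def by simp

lemma norm_le_1_if_isometric: "isometric A \<Longrightarrow> norm A \<le> 1"
  unfolding isometric_def by (intro norm_endo_le) simp_all

lemma isometric_if_adjoint_inverse:
  assumes "has_adjoint A B" and "B * A = 1"
  shows "isometric A"
  unfolding isometric_def
proof
  fix v
  have "inner (endo_apply A v) (endo_apply A v) = inner v (endo_apply (B * A) v)"
    using assms(1) unfolding has_adjoint_def by simp
  then have "norm (endo_apply A v) ^ 2 = norm v ^ 2"
    using assms(2) by (simp add: power2_norm_eq_inner)
  then show "norm (endo_apply A v) = norm v"
    by (simp add: power2_eq_iff_nonneg)
qed

lemma isometric_imag_unit: "isometric imag_unit"
  by (rule isometric_if_adjoint_inverse[OF has_adjoint_imag_unit]) (simp add: imag_unit_squared)

lemma norm_imag_unit_mult_le: "norm (imag_unit * Z) \<le> norm Z" for Z :: "'d::finite endo"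
proof -
  have "norm (imag_unit * Z) \<le> norm (imag_unit :: 'd endo) * norm Z" by (rule norm_mult_ineq)
  also have "\<dots> \<le> 1 * norm Z"
    by (rule mult_right_mono[OF norm_le_1_if_isometric[OF isometric_imag_unit] norm_ge_zero])
  finally show ?thesis by simp
qed

text \<open>A skew-adjoint generator preserves norms: \<open>\<langle>e\<^sup>r\<^sup>A v, e\<^sup>r\<^sup>A v\<rangle>\<close> has derivative
  \<open>2 \<langle>A w, w\<rangle> = 0\<close> in \<open>r\<close>.\<close>
lemma isometric_exp_skew:
  assumes "has_adjoint A (- A)"
  shows "isometric (exp (r *\<^sub>R A))"
  unfolding isometric_def
proof
  fix v
  define w where "w r = endo_apply (exp (r *\<^sub>R A)) v" for r
  have skew: "inner (endo_apply A u) u = 0" "inner u (endo_apply A u) = 0" for u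
    using assms unfolding has_adjoint_def by (metis endo_apply_uminus inner_commute
        inner_minus_right neg_equal_zero)+
  have dw: "(w has_derivative (\<lambda>x. x *\<^sub>R endo_apply A (w r))) (at r)" for r
    using bounded_linear.has_derivative[OF bounded_linear_endo_apply_left
        exp_scaleR_has_vector_derivative_left[of A r, unfolded has_vector_derivative_def], of v]
    unfolding w_def by (rule has_derivative_eq_rhs) auto
  have "((\<lambda>r. inner (w r) (w r)) has_derivative (\<lambda>x. 0)) (at r within UNIV)" for r
    by (rule has_derivative_eq_rhs[OF has_derivative_inner[OF dw dw]]) (simp add: skew)
  then obtain c where "\<And>x. inner (w x) (w x) = c"
    using has_derivative_zero_constant[of UNIV "\<lambda>r. inner (w r) (w r)"] by auto
  moreover have "w 0 = v" unfolding w_def by simp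
  ultimately have "norm (w r) ^ 2 = norm v ^ 2" by (metis power2_norm_eq_inner)
  then show "norm (endo_apply (exp (r *\<^sub>R A)) v) = norm v"
    unfolding w_def by (simp add: power2_eq_iff_nonneg)
qed

lemma mult_exp_commute: "x * y = y * x \<Longrightarrow> x * exp y = exp y * x"
  for x y :: "'a::{real_normed_algebra_1, banach}"
  by (simp add: exp_def suminf_mult[symmetric] summable_exp_generic suminf_mult2
      power_commuting_commutes[symmetric])

section \<open>Commutators in rings\<close>

definition commutator :: "'a::ring \<Rightarrow> 'a \<Rightarrow> 'a" where
  "commutator x y = x * y - y * x"

definition anticommutator :: "'a::ring \<Rightarrow> 'a \<Rightarrow> 'a" where
  "anticommutator x y = x * y + y * x"

lemma commutator_add_left: "commutator (x + y) z = commutator x z + commutator y z"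
  by (simp add: commutator_def algebra_simps)

lemma commutator_scaleR_left: "commutator (r *\<^sub>R x) z = r *\<^sub>R commutator x z"
  for x :: "'a::real_algebra"
  by (simp add: commutator_def algebra_simps)

lemma commutator_sum_left: "commutator (sum f S) z = (\<Sum>x\<in>S. commutator (f x) z)"
  by (induction S rule: infinite_finite_induct)
    (simp_all add: commutator_add_left, simp_all add: commutator_def)

lemma commutator_mult_central_left: "a * z = z * a \<Longrightarrow> commutator (a * x) z = a * commutator x z"
  by (simp add: commutator_def algebra_simps) (metis mult.assoc)

lemma commutator_product2:
  "commutator (a * b) x = a * anticommutator b x - anticommutator a x * b"
  by (simp add: commutator_def anticommutator_def algebra_simps)

lemma commutator_product4:
  "commutator (a * b * c * d) x =
     a * b * c * anticommutator d x - a * b * anticommutator c x * d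
     + a * anticommutator b x * c * d - anticommutator a x * b * c * d"
  by (simp add: commutator_def anticommutator_def algebra_simps)

lemma anticommutator_product3:
  "anticommutator (a * b * c) x =
     a * b * anticommutator c x - a * anticommutator b x * c + anticommutator a x * b * c"
  by (simp add: anticommutator_def algebra_simps)

lemma anticommutator_mult_central_left:
  "a * z = z * a \<Longrightarrow> anticommutator (a * x) z = a * anticommutator x z"
  by (simp add: anticommutator_def algebra_simps) (metis mult.assoc)

lemma reverse_product4_anticommuting:
  fixes a b c d :: "'a::ring"
  assumes "b * a = - (a * b)" "c * a = - (a * c)" "d * a = - (a * d)"
    and "c * b = - (b * c)" "d * b = - (b * d)" "d * c = - (c * d)"
  shows "d * c * b * a = a * b * c * d"
proof -
  have swap: "y * (x * z) = - (x * (y * z))" if "y * x = - (x * y)" for x y z :: 'a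
    by (metis minus_mult_left mult.assoc that)
  show ?thesis
    using assms swap[OF assms(1)] swap[OF assms(2)] swap[OF assms(3)]
      swap[OF assms(4)] swap[OF assms(5)] swap[OF assms(6)]
    by (simp add: mult.assoc)
qed

lemma norm_anticommutator_product3_le:
  fixes a b c x :: "'a::real_normed_algebra"
  assumes a: "norm a \<le> 1" and b: "norm b \<le> 1" and c: "norm c \<le> 1"
  shows "norm (anticommutator (a * b * c) x)
    \<le> norm (anticommutator a x) + norm (anticommutator b x) + norm (anticommutator c x)"
proof -
  have contract: "norm (p * q * r) \<le> norm r'" if "norm p * norm q * norm r = norm r' * k" "0 \<le> k" "k \<le> 1"
    for p q r r' :: 'a and k :: real
  proof -
    have "norm (p * q * r) \<le> norm p * norm q * norm r"
      by (metis norm_mult_ineq mult_right_mono norm_ge_zero order_trans)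
    also have "\<dots> \<le> norm r'"
      using that by (simp add: mult_left_le)
    finally show ?thesis .
  qed
  have "norm (a * b * anticommutator c x) \<le> norm (anticommutator c x)"
    by (rule contract[where k = "norm a * norm b"]) (use a b in \<open>auto simp: mult_le_one ac_simps\<close>)
  moreover have "norm (a * anticommutator b x * c) \<le> norm (anticommutator b x)"
    by (rule contract[where k = "norm a * norm c"]) (use a c in \<open>auto simp: mult_le_one ac_simps\<close>)
  moreover have "norm (anticommutator a x * b * c) \<le> norm (anticommutator a x)"
    by (rule contract[where k = "norm b * norm c"]) (use b c in \<open>auto simp: mult_le_one ac_simps\<close>)
  ultimately show ?thesis
    unfolding anticommutator_product3
    by (smt (verit) norm_triangle_ineq norm_triangle_ineq4)
qed

section \<open>A comparison principle for differential inequalities\<close>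

lemma first_crossing_time:
  fixes g :: "'i \<Rightarrow> real \<Rightarrow> real"
  assumes "finite I"
    and cont: "\<And>i. i \<in> I \<Longrightarrow> continuous_on {0..} (g i)"
    and pos: "\<And>i. i \<in> I \<Longrightarrow> g i 0 > 0"
    and crossing: "i0 \<in> I" "s0 \<ge> 0" "g i0 s0 \<le> 0"
  obtains t i where "t > 0" "i \<in> I" "g i t = 0"
    and "\<And>j r. j \<in> I \<Longrightarrow> 0 \<le> r \<Longrightarrow> r < t \<Longrightarrow> g j r > 0"
    and "\<And>j. j \<in> I \<Longrightarrow> g j t \<ge> 0"
proof -
  define S where "S = (\<Union>i\<in>I. {s \<in> {0..}. g i s \<le> 0})"
  have "closed S"
    unfolding S_def using \<open>finite I\<close>
    by (intro closed_UN ballI continuous_on_closed_Collect_le[OF cont continuous_on_const]) auto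
  moreover have "S \<noteq> {}" and bdd: "bdd_below S"
    using crossing unfolding S_def by (auto intro!: bdd_belowI[of _ 0])
  ultimately have "Inf S \<in> S" using closed_contains_Inf by blast
  then obtain i where i: "i \<in> I" "Inf S \<ge> 0" "g i (Inf S) \<le> 0" unfolding S_def by auto
  have before: "g j r > 0" if "j \<in> I" "0 \<le> r" "r < Inf S" for j r
  proof (rule ccontr)
    assume "\<not> g j r > 0"
    then have "r \<in> S" unfolding S_def using that by force
    then show False using cInf_lower[OF _ bdd] that(3) by fastforce
  qed
  have "Inf S \<noteq> 0" using pos[OF i(1)] i(3) by auto
  then have "Inf S > 0" using i(2) by simp
  have at_crossing: "g j (Inf S) \<ge> 0" if "j \<in> I" for j
  proof -
    have "closed {s \<in> {0..Inf S}. 0 \<le> g j s}"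
      using cont[OF that]
      by (intro continuous_on_closed_Collect_le continuous_on_const) (auto intro: continuous_on_subset)
    moreover have "{0..<Inf S} \<subseteq> {s \<in> {0..Inf S}. 0 \<le> g j s}"
      using before[OF that] by (auto intro: less_imp_le)
    ultimately have "closure {0..<Inf S} \<subseteq> {s \<in> {0..Inf S}. 0 \<le> g j s}"
      by (rule closure_minimal[rotated])
    then show ?thesis using \<open>Inf S > 0\<close> by (auto dest!: subsetD[where c = "Inf S"])
  qed
  show thesis
    using that[OF \<open>Inf S > 0\<close> i(1) _ before at_crossing] i(3) at_crossing[OF i(1)] by simp
qed

lemma eventually_gap_less_at_left:
  fixes X :: "real \<Rightarrow> 'a::real_normed_vector"
  assumes dX: "(X has_vector_derivative V) (at_left t)"
    and dz: "(z has_real_derivative z') (at_left t)"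
    and less: "norm V < z'"
  shows "\<forall>\<^sub>F r in at_left t. z r - norm (X r) < z t - norm (X t)"
proof -
  define q where "q r = norm (X r - X t - (r - t) *\<^sub>R V) / norm (r - t)" for r
  have "(q \<longlongrightarrow> 0) (at_left t)"
    using dX unfolding has_vector_derivative_def has_derivative_iff_norm q_def by simp
  moreover have "((\<lambda>r. (z r - z t) / (r - t)) \<longlongrightarrow> z') (at_left t)"
    using dz by (simp add: has_field_derivative_iff)
  ultimately have "((\<lambda>r. (z r - z t) / (r - t) - q r) \<longlongrightarrow> z' - 0) (at_left t)"
    by (intro tendsto_intros)
  then have "\<forall>\<^sub>F r in at_left t. (z r - z t) / (r - t) - q r > norm V"
    using less by (intro order_tendstoD) auto
  moreover have "\<forall>\<^sub>F r in at_left t. r < t"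
    by (simp add: eventually_at_filter)
  ultimately show ?thesis
  proof eventually_elim
    case (elim r)
    define N where "N = norm (X r - X t - (r - t) *\<^sub>R V)"
    have "q r = N / (t - r)"
      using elim(2) by (simp add: q_def N_def)
    moreover have "(z r - z t) / (r - t) = (z t - z r) / (t - r)"
      by (metis minus_diff_eq minus_divide_divide)
    ultimately have "(z r - z t) / (r - t) - q r = (z t - z r - N) / (t - r)"
      by (simp add: diff_divide_distrib)
    then have "N + (t - r) * norm V < z t - z r"
      using elim pos_less_divide_eq[of "t - r"] by (simp add: algebra_simps)
    moreover have "norm (X r - X t) \<le> N + (t - r) * norm V"
      using norm_triangle_ineq[of "X r - X t - (r - t) *\<^sub>R V" "(r - t) *\<^sub>R V"] elim(2)
      by (simp add: N_def)
    moreover have "norm (X t) - norm (X r) \<le> norm (X r - X t)"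
      by (metis norm_minus_commute norm_triangle_ineq2)
    ultimately show ?case by linarith
  qed
qed

text \<open>The hypotheses on \<open>F\<close> make \<open>c + \<epsilon> e\<^sup>B\<^sup>s\<close> a strict supersolution once \<open>B > F 1\<close>, so
  \<open>\<parallel>X\<parallel>\<close> cannot reach it.\<close>
lemma norm_less_perturbed_comparison:
  fixes X X' :: "real \<Rightarrow> nat \<Rightarrow> 'v::real_normed_vector"
    and c :: "real \<Rightarrow> nat \<Rightarrow> real" and F :: "(nat \<Rightarrow> real) \<Rightarrow> nat \<Rightarrow> real"
  assumes dX: "\<And>s i. s \<ge> 0 \<Longrightarrow> i < n \<Longrightarrow> ((\<lambda>r. X r i) has_vector_derivative X' s i) (at s)"
    and bound: "\<And>s i. s \<ge> 0 \<Longrightarrow> i < n \<Longrightarrow> norm (X' s i) \<le> F (\<lambda>j. norm (X s j)) i"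
    and dc: "\<And>s i. s \<ge> 0 \<Longrightarrow> i < n \<Longrightarrow> ((\<lambda>r. c r i) has_real_derivative F (c s) i) (at s within {0..})"
    and init: "\<And>i. i < n \<Longrightarrow> norm (X 0 i) \<le> c 0 i"
    and mono: "\<And>y y' i. i < n \<Longrightarrow> (\<And>j. j < n \<Longrightarrow> y j \<le> y' j) \<Longrightarrow> F y i \<le> F y' i"
    and shift: "\<And>y e i. i < n \<Longrightarrow> F (\<lambda>j. y j + e) i = F y i + e * F (\<lambda>j. 1) i"
    and B: "\<And>i. i < n \<Longrightarrow> F (\<lambda>j. 1) i < B"
    and "\<epsilon> > 0" "s \<ge> 0" "i < n"
  shows "norm (X s i) < c s i + \<epsilon> * exp (B * s)"
proof (rule ccontr)
  define z where "z i r = c r i + \<epsilon> * exp (B * r)" for i r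
  define g where "g i r = z i r - norm (X r i)" for i r
  assume "\<not> norm (X s i) < c s i + \<epsilon> * exp (B * s)"
  then have crossing: "g i s \<le> 0" unfolding g_def z_def by simp
  have cont: "continuous_on {0..} (g i)" if "i < n" for i
  proof -
    have "continuous_on {0..} (\<lambda>r. c r i)"
      using dc[OF _ that] by (auto simp: continuous_on_eq_continuous_within intro: DERIV_continuous)
    moreover have "continuous_on {0..} (\<lambda>r. X r i)"
      using dX[OF _ that] by (auto simp: continuous_on_eq_continuous_within
          intro: continuous_at_imp_continuous_at_within has_vector_derivative_continuous)
    ultimately show ?thesis unfolding g_def z_def by (intro continuous_intros)
  qed
  have pos: "g i 0 > 0" if "i < n" for i
    using init[OF that] \<open>\<epsilon> > 0\<close> unfolding g_def z_def by simp
  obtain t k where t: "t > 0" "k < n" "g k t = 0"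
    and before: "\<And>j r. j < n \<Longrightarrow> 0 \<le> r \<Longrightarrow> r < t \<Longrightarrow> g j r > 0"
    and at_t: "\<And>j. j < n \<Longrightarrow> g j t \<ge> 0"
    using first_crossing_time[of "{..<n}" g i s] crossing cont pos assms(9,10)
    unfolding lessThan_iff by blast
  define z' where "z' = F (c t) k + \<epsilon> * (B * exp (B * t))"
  have "norm (X' t k) \<le> F (\<lambda>j. norm (X t j)) k"
    using bound t by simp
  also have "\<dots> \<le> F (\<lambda>j. c t j + \<epsilon> * exp (B * t)) k"
    using at_t t(2) unfolding g_def z_def by (intro mono) auto
  also have "\<dots> = F (c t) k + \<epsilon> * exp (B * t) * F (\<lambda>j. 1) k"
    using shift[OF t(2)] by simp
  also have "\<dots> < z'"
    unfolding z'_def using B[OF t(2)] \<open>\<epsilon> > 0\<close> by simp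
  finally have "norm (X' t k) < z'" .
  moreover have "(z k has_real_derivative z') (at_left t)"
  proof -
    have "((\<lambda>r. c r k) has_real_derivative F (c t) k) (at t within {0<..})"
      using dc[of t k] t by (auto intro: has_field_derivative_subset)
    then have "((\<lambda>r. c r k) has_real_derivative F (c t) k) (at t)"
      using t(1) at_within_open[of t "{0<..}"] by simp
    then have "(z k has_real_derivative z') (at t)"
      unfolding z_def z'_def by (auto intro!: derivative_eq_intros)
    then show ?thesis by (rule has_field_derivative_at_within)
  qed
  moreover have "((\<lambda>r. X r k) has_vector_derivative X' t k) (at_left t)"
    using dX[of t k] t by (simp add: has_vector_derivative_at_within)
  ultimately have "\<forall>\<^sub>F r in at_left t. g k r < g k t"
    unfolding g_def by (intro eventually_gap_less_at_left)
  moreover have "\<forall>\<^sub>F r in at_left t. r \<in> {0<..<t}"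
    using t(1) by (rule eventually_at_left_real)
  ultimately obtain r where "g k r < 0" "r \<in> {0<..<t}"
    using t(3) by (metis (mono_tags, lifting) eventually_conj eventually_happens' trivial_limit_at_left_real)
  then show False using before[OF t(2), of r] by simp
qed

lemma norm_le_comparison:
  fixes X X' :: "real \<Rightarrow> nat \<Rightarrow> 'v::real_normed_vector"
    and c :: "real \<Rightarrow> nat \<Rightarrow> real" and F :: "(nat \<Rightarrow> real) \<Rightarrow> nat \<Rightarrow> real"
  assumes dX: "\<And>s i. s \<ge> 0 \<Longrightarrow> i < n \<Longrightarrow> ((\<lambda>r. X r i) has_vector_derivative X' s i) (at s)"
    and bound: "\<And>s i. s \<ge> 0 \<Longrightarrow> i < n \<Longrightarrow> norm (X' s i) \<le> F (\<lambda>j. norm (X s j)) i"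
    and dc: "\<And>s i. s \<ge> 0 \<Longrightarrow> i < n \<Longrightarrow> ((\<lambda>r. c r i) has_real_derivative F (c s) i) (at s within {0..})"
    and init: "\<And>i. i < n \<Longrightarrow> norm (X 0 i) \<le> c 0 i"
    and mono: "\<And>y y' i. i < n \<Longrightarrow> (\<And>j. j < n \<Longrightarrow> y j \<le> y' j) \<Longrightarrow> F y i \<le> F y' i"
    and shift: "\<And>y e i. i < n \<Longrightarrow> F (\<lambda>j. y j + e) i = F y i + e * F (\<lambda>j. 1) i"
    and "s \<ge> 0" "i < n"
  shows "norm (X s i) \<le> c s i"
proof (rule field_le_epsilon)
  fix e :: real
  assume "e > 0"
  define B where "B = 1 + (\<Sum>i<n. \<bar>F (\<lambda>j. 1) i\<bar>)"
  have "F (\<lambda>j. 1) i < B" if "i < n" for i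
  proof -
    have "\<bar>F (\<lambda>j. 1) i\<bar> \<le> (\<Sum>i<n. \<bar>F (\<lambda>j. 1) i\<bar>)"
      using that by (intro member_le_sum) auto
    then show ?thesis unfolding B_def by linarith
  qed
  then have "norm (X s i) < c s i + e / exp (B * s) * exp (B * s)"
    using \<open>e > 0\<close> assms
    by (intro norm_less_perturbed_comparison[where F = F and X' = X']) auto
  then show "norm (X s i) \<le> c s i + e" by simp
qed

section \<open>Sums over sorted tuples containing a given index\<close>

lemma bij_betw_insert_sorted_pair:
  fixes i n :: nat
  assumes "i < n"
  shows "bij_betw (\<lambda>j. if i < j then (i, j) else (j, i))
    {j. j < n \<and> j \<noteq> i} {(a, b). a < b \<and> b < n \<and> (a = i \<or> b = i)}"
  by (rule bij_betw_byWitness[where f' = "\<lambda>(a, b). if a = i then b else a"])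
    (use assms in \<open>auto split: if_splits\<close>)

lemma bij_betw_insert_sorted_triple:
  fixes i n :: nat
  assumes "i < n"
  shows "bij_betw
    (\<lambda>(j, k, l). if i < j then (i, j, k, l) else if i < k then (j, i, k, l)
      else if i < l then (j, k, i, l) else (j, k, l, i))
    {(j, k, l). j < k \<and> k < l \<and> l < n \<and> j \<noteq> i \<and> k \<noteq> i \<and> l \<noteq> i}
    {(a, b, c, d). a < b \<and> b < c \<and> c < d \<and> d < n \<and> (a = i \<or> b = i \<or> c = i \<or> d = i)}"
  by (rule bij_betw_byWitness[where f' = "\<lambda>(a, b, c, d). if a = i then (b, c, d)
      else if b = i then (a, c, d) else if c = i then (a, b, d) else (a, b, c)"])
    (use assms in \<open>auto split: if_splits\<close>)

lemma sum_sorted_pairs_incident: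
  fixes t :: "nat \<Rightarrow> nat \<Rightarrow> real" and y :: "nat \<Rightarrow> real"
  assumes t: "antisym2 t" and i: "i < n"
  shows "(\<Sum>(a, b)\<in>{(a, b). a < b \<and> b < n}.
      \<bar>t a b\<bar> * ((if a = i then y b else 0) + (if b = i then y a else 0)))
    = (\<Sum>j<n. \<bar>t i j\<bar> * y j)"
proof -
  define f where "f = (\<lambda>(a, b). \<bar>t a b\<bar> * ((if a = i then y b else 0) + (if b = i then y a else 0)))"
  have t_sym: "\<bar>t j k\<bar> = \<bar>t k j\<bar>" for j k
    using t[unfolded antisym2_def, rule_format, of j k] by simp
  have t_diag: "t k k = 0" for k
    using t[unfolded antisym2_def, rule_format, of k k] by simp
  have "finite {(a, b). a < b \<and> b < n}"
    by (rule finite_subset[of _ "{..<n} \<times> {..<n}"]) auto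
  then have "sum f {(a, b). a < b \<and> b < n} = sum f {(a, b). a < b \<and> b < n \<and> (a = i \<or> b = i)}"
    by (rule sum.mono_neutral_right) (auto simp: f_def split: if_splits)
  also have "\<dots> = (\<Sum>j\<in>{j. j < n \<and> j \<noteq> i}. f (if i < j then (i, j) else (j, i)))"
    by (rule sum.reindex_bij_betw[OF bij_betw_insert_sorted_pair[OF i], symmetric])
  also have "\<dots> = (\<Sum>j\<in>{j. j < n \<and> j \<noteq> i}. \<bar>t i j\<bar> * y j)"
    by (intro sum.cong) (auto simp: f_def t_sym)
  also have "\<dots> = (\<Sum>j<n. \<bar>t i j\<bar> * y j)"
    by (intro sum.mono_neutral_left) (auto simp: t_diag)
  finally show ?thesis unfolding f_def .
qed

lemma sum_sorted_quadruples_incident: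
  fixes U :: "nat \<Rightarrow> nat \<Rightarrow> nat \<Rightarrow> nat \<Rightarrow> real" and y :: "nat \<Rightarrow> real"
  assumes U: "antisym4 U" and i: "i < n"
  shows "(\<Sum>(a, b, c, d)\<in>{(a, b, c, d). a < b \<and> b < c \<and> c < d \<and> d < n}. \<bar>U a b c d\<bar> *
      ((if a = i then y b + y c + y d else 0) + (if b = i then y a + y c + y d else 0)
       + (if c = i then y a + y b + y d else 0) + (if d = i then y a + y b + y c else 0)))
    = (\<Sum>(j, k, l)\<in>{(j, k, l). j < k \<and> k < l \<and> l < n \<and> j \<noteq> i \<and> k \<noteq> i \<and> l \<noteq> i}.
        \<bar>U i j k l\<bar> * (y j + y k + y l))"
proof -
  define f where "f = (\<lambda>(a, b, c, d). \<bar>U a b c d\<bar> *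
      ((if a = i then y b + y c + y d else 0) + (if b = i then y a + y c + y d else 0)
       + (if c = i then y a + y b + y d else 0) + (if d = i then y a + y b + y c else 0)))"
  define ins where "ins = (\<lambda>(j, k, l). if i < j then (i, j, k, l) else if i < k then (j, i, k, l)
      else if i < l then (j, k, i, l) else (j, k, l, i))"
  define T where "T = {(j, k, l). j < k \<and> k < l \<and> l < n \<and> j \<noteq> i \<and> k \<noteq> i \<and> l \<noteq> i}"
  have "finite {(a, b, c, d). a < b \<and> b < c \<and> c < d \<and> d < n}"
    by (rule finite_subset[of _ "{..<n} \<times> {..<n} \<times> {..<n} \<times> {..<n}"]) auto
  then have "sum f {(a, b, c, d). a < b \<and> b < c \<and> c < d \<and> d < n}
      = sum f {(a, b, c, d). a < b \<and> b < c \<and> c < d \<and> d < n \<and> (a = i \<or> b = i \<or> c = i \<or> d = i)}"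
    by (rule sum.mono_neutral_right) (auto simp: f_def split: if_splits)
  also have "\<dots> = (\<Sum>p\<in>T. f (ins p))"
    unfolding ins_def T_def by (rule sum.reindex_bij_betw[OF bij_betw_insert_sorted_triple[OF i], symmetric])
  also have "\<dots> = (\<Sum>(j, k, l)\<in>T. \<bar>U i j k l\<bar> * (y j + y k + y l))"
  proof (intro sum.cong refl, clarify)
    fix j k l assume jkl: "(j, k, l) \<in> T"
    have "U i j k l = - U j i k l" "U j i k l = - U j k i l" "U j k i l = - U j k l i"
      using U unfolding antisym4_def by blast+
    then have swaps: "\<bar>U j i k l\<bar> = \<bar>U i j k l\<bar>" "\<bar>U j k i l\<bar> = \<bar>U i j k l\<bar>"
        "\<bar>U j k l i\<bar> = \<bar>U i j k l\<bar>"
      by simp_all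
    from jkl consider "i < j" | "j < i" "i < k" | "k < i" "i < l" | "l < i"
      unfolding T_def by fastforce
    then show "f (ins (j, k, l)) = \<bar>U i j k l\<bar> * (y j + y k + y l)"
      using jkl by cases (auto simp: f_def ins_def T_def swaps algebra_simps)
  qed
  finally show ?thesis unfolding f_def T_def .
qed

definition majorana_rate ::
    "nat \<Rightarrow> (nat \<Rightarrow> nat \<Rightarrow> real) \<Rightarrow> (nat \<Rightarrow> nat \<Rightarrow> nat \<Rightarrow> nat \<Rightarrow> real) \<Rightarrow> (nat \<Rightarrow> real) \<Rightarrow> nat \<Rightarrow> real"
  where "majorana_rate n t U y i =
    2 * (\<Sum>(j, k, l)\<in>{(j, k, l). j < k \<and> k < l \<and> l < n \<and> j \<noteq> i \<and> k \<noteq> i \<and> l \<noteq> i}.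
            \<bar>U i j k l\<bar> * (y j + y k + y l))
    + 2 * (\<Sum>j<n. \<bar>t i j\<bar> * y j)"

lemma majorana_rate_mono:
  assumes "\<And>j. j < n \<Longrightarrow> y j \<le> y' j"
  shows "majorana_rate n t U y i \<le> majorana_rate n t U y' i"
  unfolding majorana_rate_def
  by (intro add_mono mult_left_mono sum_mono) (auto intro!: mult_left_mono add_mono assms)

lemma majorana_rate_shift:
  "majorana_rate n t U (\<lambda>j. y j + e) i = majorana_rate n t U y i + e * majorana_rate n t U (\<lambda>j. 1) i"
  unfolding majorana_rate_def
  by (simp add: case_prod_beta algebra_simps sum.distrib sum_distrib_left)

section \<open>The Majorana Hamiltonian as an operator\<close>

text \<open>\<open>C i\<close> is the operator of \<open>c\<^sub>i\<close> and \<open>imag_unit * H\<close> that of \<open>i H\<close>, so \<open>propagator s\<close>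
  is \<open>e\<^sup>i\<^sup>H\<^sup>s\<close> and \<open>heisenberg s Z\<close> is the Heisenberg-picture operator \<open>Z(s)\<close>.\<close>
locale majorana_hamiltonian =
  fixes n :: nat and C :: "nat \<Rightarrow> 'd::finite endo"
    and t :: "nat \<Rightarrow> nat \<Rightarrow> real" and U :: "nat \<Rightarrow> nat \<Rightarrow> nat \<Rightarrow> nat \<Rightarrow> real"
  assumes anticommutator_C: "i < n \<Longrightarrow> j < n \<Longrightarrow> anticommutator (C i) (C j) = (if i = j then 2 else 0)"
    and has_adjoint_C: "i < n \<Longrightarrow> has_adjoint (C i) (C i)"
    and imag_unit_commute_C: "imag_unit * C i = C i * imag_unit"
begin

definition H :: "'d endo" where
  "H = (\<Sum>(a, b)\<in>{(a, b). a < b \<and> b < n}. t a b *\<^sub>R (imag_unit * (C a * C b)))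
     + (\<Sum>(a, b, c, d)\<in>{(a, b, c, d). a < b \<and> b < c \<and> c < d \<and> d < n}.
          U a b c d *\<^sub>R (C a * C b * C c * C d))"

definition propagator :: "real \<Rightarrow> 'd endo" where
  "propagator s = exp (s *\<^sub>R (imag_unit * H))"

definition heisenberg :: "real \<Rightarrow> 'd endo \<Rightarrow> 'd endo" where
  "heisenberg s Z = propagator s * Z * propagator (- s)"

lemma C_square: "i < n \<Longrightarrow> C i * C i = 1"
proof -
  assume "i < n"
  then have "(2::real) *\<^sub>R (C i * C i) = (2::real) *\<^sub>R 1"
    using anticommutator_C[of i i] by (simp add: anticommutator_def scaleR_2 one_add_one)
  then show ?thesis by simp
qed

lemma C_swap: "j < i \<Longrightarrow> i < n \<Longrightarrow> C i * C j = - (C j * C i)"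
  using anticommutator_C[of i j] by (simp add: anticommutator_def eq_neg_iff_add_eq_0)

lemma imag_unit_left_commute_C: "imag_unit * (C i * Z) = C i * (imag_unit * Z)"
  by (simp add: imag_unit_commute_C flip: mult.assoc)

lemma imag_unit_commute_H: "imag_unit * H = H * imag_unit"
  unfolding H_def
  by (simp add: distrib_left distrib_right sum_distrib_left sum_distrib_right case_prod_beta
      mult.assoc imag_unit_left_commute_C imag_unit_commute_C)

lemma has_adjoint_H: "has_adjoint H H"
proof -
  have pair: "has_adjoint (imag_unit * (C a * C b)) (imag_unit * (C a * C b))" if "a < b" "b < n" for a b
  proof -
    have "has_adjoint (imag_unit * (C a * C b)) (C b * C a * - imag_unit)"
      using that by (intro has_adjoint_mult has_adjoint_imag_unit has_adjoint_C) auto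
    moreover have "C b * C a * - imag_unit = imag_unit * (C a * C b)"
      using that by (simp add: C_swap imag_unit_left_commute_C imag_unit_commute_C mult.assoc)
    ultimately show ?thesis by simp
  qed
  have quadruple: "has_adjoint (C a * C b * C c * C d) (C a * C b * C c * C d)"
    if "a < b" "b < c" "c < d" "d < n" for a b c d
  proof -
    have "has_adjoint (C a * C b * C c * C d) (C d * (C c * (C b * C a)))"
      using that by (intro has_adjoint_mult has_adjoint_C) auto
    moreover have "C d * C c * C b * C a = C a * C b * C c * C d"
      using that by (intro reverse_product4_anticommuting C_swap) auto
    then have "C d * (C c * (C b * C a)) = C a * C b * C c * C d"
      by (simp add: mult.assoc)
    ultimately show ?thesis by simp
  qed
  show ?thesis
    unfolding H_def
    by (intro has_adjoint_add has_adjoint_sum) (auto intro!: has_adjoint_scaleR pair quadruple)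
qed

lemma isometric_propagator: "isometric (propagator s)"
proof -
  have "has_adjoint (imag_unit * H) (- (imag_unit * H))"
    using has_adjoint_mult[OF has_adjoint_imag_unit has_adjoint_H] by (simp add: imag_unit_commute_H)
  then show ?thesis
    unfolding propagator_def by (rule isometric_exp_skew)
qed

lemma propagator_minus_mult_propagator: "propagator (- s) * (propagator s * Z) = Z"
  unfolding propagator_def using exp_minus_inverse[of "- (s *\<^sub>R (imag_unit * H))"]
  by (simp flip: mult.assoc)

lemma imag_unit_commute_propagator: "imag_unit * propagator s = propagator s * imag_unit"
  unfolding propagator_def by (rule mult_exp_commute) (simp add: imag_unit_commute_H flip: mult.assoc)

lemma heisenberg_0: "heisenberg 0 Z = Z"
  by (simp add: heisenberg_def propagator_def)

lemma heisenberg_mult: "heisenberg s (Z * W) = heisenberg s Z * heisenberg s W"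
  unfolding heisenberg_def by (simp add: mult.assoc propagator_minus_mult_propagator)

lemma heisenberg_imag_unit: "heisenberg s (imag_unit * Z) = imag_unit * heisenberg s Z"
  unfolding heisenberg_def by (simp add: imag_unit_commute_propagator flip: mult.assoc)

lemma linear_anticommutator_heisenberg: "linear (\<lambda>W. anticommutator (heisenberg s W) Z)"
  by (rule linearI) (simp_all add: heisenberg_def anticommutator_def algebra_simps)

lemma norm_heisenberg_C_le: "i < n \<Longrightarrow> norm (heisenberg s (C i)) \<le> 1"
  unfolding heisenberg_def
  by (intro norm_le_1_if_isometric isometric_mult isometric_propagator
      isometric_if_adjoint_inverse[OF has_adjoint_C] C_square)

lemma has_vector_derivative_heisenberg:
  "((\<lambda>r. heisenberg r Z) has_vector_derivative heisenberg s (commutator (imag_unit * H) Z)) (at s)"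
proof -
  have "(propagator has_vector_derivative propagator s * (imag_unit * H)) (at s)"
    unfolding propagator_def by (rule exp_scaleR_has_vector_derivative_right)
  moreover have "((\<lambda>r. propagator (- r)) has_vector_derivative - (imag_unit * H) * propagator (- s)) (at s)"
    unfolding propagator_def using exp_scaleR_has_vector_derivative_left[of "- (imag_unit * H)" s] by simp
  ultimately have "((\<lambda>r. propagator r * Z * propagator (- r)) has_vector_derivative
      propagator s * Z * (- (imag_unit * H) * propagator (- s))
      + propagator s * (imag_unit * H) * Z * propagator (- s)) (at s)"
    by (intro has_vector_derivative_mult has_vector_derivative_mult_left)
  then show ?thesis
    unfolding heisenberg_def commutator_def by (simp add: algebra_simps)
qed

lemma has_vector_derivative_anticommutator_heisenberg:
  "((\<lambda>r. anticommutator (heisenberg r Z) W) has_vector_derivative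
     anticommutator (heisenberg s (commutator (imag_unit * H) Z)) W) (at s)"
  unfolding anticommutator_def
  by (intro has_vector_derivative_add has_vector_derivative_mult_left has_vector_derivative_mult_right
      has_vector_derivative_heisenberg)

lemma commutator_H_C:
  "commutator H (C i) =
     (\<Sum>(a, b)\<in>{(a, b). a < b \<and> b < n}. t a b *\<^sub>R (imag_unit * commutator (C a * C b) (C i)))
   + (\<Sum>(a, b, c, d)\<in>{(a, b, c, d). a < b \<and> b < c \<and> c < d \<and> d < n}.
        U a b c d *\<^sub>R commutator (C a * C b * C c * C d) (C i))"
  unfolding H_def
  by (simp add: commutator_add_left commutator_sum_left commutator_scaleR_left case_prod_beta
      commutator_mult_central_left imag_unit_commute_C)

lemma commutator_pair_C:
  assumes "a < n" "b < n" "i < n"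
  shows "commutator (C a * C b) (C i) =
    2 *\<^sub>R ((if b = i then C a else 0) - (if a = i then C b else 0))"
  unfolding commutator_product2 using assms by (simp add: anticommutator_C scaleR_2 mult_2 mult_2_right)

lemma commutator_quadruple_C:
  assumes "a < n" "b < n" "c < n" "d < n" "i < n"
  shows "commutator (C a * C b * C c * C d) (C i) =
    2 *\<^sub>R ((if d = i then C a * C b * C c else 0) - (if c = i then C a * C b * C d else 0)
      + (if b = i then C a * C c * C d else 0) - (if a = i then C b * C c * C d else 0))"
  unfolding commutator_product4 using assms
  by (simp add: anticommutator_C scaleR_2 mult_2 mult_2_right algebra_simps)

definition anticomm_norm :: "real \<Rightarrow> 'd endo \<Rightarrow> nat \<Rightarrow> real" where
  "anticomm_norm s Z j = norm (anticommutator (heisenberg s (C j)) Z)"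

lemma norm_anticommutator_heisenberg_commutator_pair_le:
  assumes "a < n" "b < n" "i < n"
  shows "norm (anticommutator (heisenberg s (commutator (C a * C b) (C i))) Z)
    \<le> 2 * ((if a = i then anticomm_norm s Z b else 0) + (if b = i then anticomm_norm s Z a else 0))"
proof -
  note lin = linear_anticommutator_heisenberg[of s Z]
  have "anticommutator (heisenberg s (commutator (C a * C b) (C i))) Z =
      2 *\<^sub>R ((if b = i then anticommutator (heisenberg s (C a)) Z else 0)
        - (if a = i then anticommutator (heisenberg s (C b)) Z else 0))"
    unfolding commutator_pair_C[OF assms] linear_scale[OF lin] linear_diff[OF lin]
    by (simp add: linear_0[OF lin])
  then show ?thesis
    unfolding anticomm_norm_def using norm_triangle_ineq4 by (simp add: add.commute)
qed

lemma norm_anticommutator_heisenberg_commutator_quadruple_le: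
  assumes "a < n" "b < n" "c < n" "d < n" "i < n"
  shows "norm (anticommutator (heisenberg s (commutator (C a * C b * C c * C d) (C i))) Z) \<le> 2 *
    ((if a = i then anticomm_norm s Z b + anticomm_norm s Z c + anticomm_norm s Z d else 0)
     + (if b = i then anticomm_norm s Z a + anticomm_norm s Z c + anticomm_norm s Z d else 0)
     + (if c = i then anticomm_norm s Z a + anticomm_norm s Z b + anticomm_norm s Z d else 0)
     + (if d = i then anticomm_norm s Z a + anticomm_norm s Z b + anticomm_norm s Z c else 0))"
proof -
  note lin = linear_anticommutator_heisenberg[of s Z]
  define \<beta> where "\<beta> W = anticommutator (heisenberg s W) Z" for W
  have \<beta>_0: "\<beta> 0 = 0"
    unfolding \<beta>_def by (rule linear_0[OF lin])
  have triple: "norm (\<beta> (C p * C q * C r)) \<le> anticomm_norm s Z p + anticomm_norm s Z q + anticomm_norm s Z r"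
    if "p < n" "q < n" "r < n" for p q r
    unfolding \<beta>_def anticomm_norm_def heisenberg_mult using that
    by (intro norm_anticommutator_product3_le norm_heisenberg_C_le)
  define Ta where "Ta = (if a = i then \<beta> (C b * C c * C d) else 0)"
  define Tb where "Tb = (if b = i then \<beta> (C a * C c * C d) else 0)"
  define Tc where "Tc = (if c = i then \<beta> (C a * C b * C d) else 0)"
  define Td where "Td = (if d = i then \<beta> (C a * C b * C c) else 0)"
  have "\<beta> (commutator (C a * C b * C c * C d) (C i)) = 2 *\<^sub>R (Td - Tc + Tb - Ta)"
    unfolding commutator_quadruple_C[OF assms] \<beta>_def linear_scale[OF lin] linear_diff[OF lin]
      linear_add[OF lin]
    by (simp add: Ta_def Tb_def Tc_def Td_def \<beta>_0 flip: \<beta>_def)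
  then have "norm (\<beta> (commutator (C a * C b * C c * C d) (C i)))
      \<le> 2 * (norm Ta + norm Tb + norm Tc + norm Td)"
    using norm_triangle_ineq[of "Td - Tc + Tb" "- Ta"] norm_triangle_ineq[of "Td - Tc" Tb]
      norm_triangle_ineq4[of Td Tc] by simp
  moreover have "norm Ta + norm Tb + norm Tc + norm Td \<le>
      (if a = i then anticomm_norm s Z b + anticomm_norm s Z c + anticomm_norm s Z d else 0)
    + (if b = i then anticomm_norm s Z a + anticomm_norm s Z c + anticomm_norm s Z d else 0)
    + (if c = i then anticomm_norm s Z a + anticomm_norm s Z b + anticomm_norm s Z d else 0)
    + (if d = i then anticomm_norm s Z a + anticomm_norm s Z b + anticomm_norm s Z c else 0)"
    using assms triple by (intro add_mono) (simp_all add: Ta_def Tb_def Tc_def Td_def)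
  ultimately show ?thesis
    unfolding \<beta>_def by argo
qed

lemma norm_anticommutator_heisenberg_commutator_le:
  assumes t: "antisym2 t" and U: "antisym4 U" and i: "i < n"
    and Z: "imag_unit * Z = Z * imag_unit"
  shows "norm (anticommutator (heisenberg s (commutator (imag_unit * H) (C i))) Z)
    \<le> majorana_rate n t U (anticomm_norm s Z) i"
proof -
  note lin = linear_anticommutator_heisenberg[of s Z]
  define x where "x = anticomm_norm s Z"
  have imag_unit: "anticommutator (heisenberg s (imag_unit * W)) Z = imag_unit * anticommutator (heisenberg s W) Z"
    for W unfolding heisenberg_imag_unit using Z by (rule anticommutator_mult_central_left)
  have "norm (anticommutator (heisenberg s (commutator (imag_unit * H) (C i))) Z)
      \<le> norm (anticommutator (heisenberg s (commutator H (C i))) Z)"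
    by (simp add: commutator_mult_central_left imag_unit_commute_C imag_unit norm_imag_unit_mult_le)
  also have "\<dots> = norm
     ((\<Sum>(a, b)\<in>{(a, b). a < b \<and> b < n}.
        t a b *\<^sub>R (imag_unit * anticommutator (heisenberg s (commutator (C a * C b) (C i))) Z))
    + (\<Sum>(a, b, c, d)\<in>{(a, b, c, d). a < b \<and> b < c \<and> c < d \<and> d < n}.
        U a b c d *\<^sub>R anticommutator (heisenberg s (commutator (C a * C b * C c * C d) (C i))) Z))"
    unfolding commutator_H_C linear_add[OF lin] linear_sum[OF lin]
    by (simp add: linear_scale[OF lin] imag_unit case_prod_beta)
  also have "\<dots> \<le>
      (\<Sum>(a, b)\<in>{(a, b). a < b \<and> b < n}. \<bar>t a b\<bar> * (2 * ((if a = i then x b else 0) + (if b = i then x a else 0))))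
    + (\<Sum>(a, b, c, d)\<in>{(a, b, c, d). a < b \<and> b < c \<and> c < d \<and> d < n}. \<bar>U a b c d\<bar> *
      (2 * ((if a = i then x b + x c + x d else 0) + (if b = i then x a + x c + x d else 0)
         + (if c = i then x a + x b + x d else 0) + (if d = i then x a + x b + x c else 0))))"
    unfolding x_def
    by (intro norm_triangle_le add_mono sum_norm_le; clarsimp simp only: mem_Collect_eq prod.case norm_scaleR;
        intro mult_left_mono order_trans[OF norm_imag_unit_mult_le]
          norm_anticommutator_heisenberg_commutator_pair_le
          norm_anticommutator_heisenberg_commutator_quadruple_le) (use i in auto)
  also have "\<dots> =
      2 * (\<Sum>(a, b)\<in>{(a, b). a < b \<and> b < n}. \<bar>t a b\<bar> * ((if a = i then x b else 0) + (if b = i then x a else 0)))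
    + 2 * (\<Sum>(a, b, c, d)\<in>{(a, b, c, d). a < b \<and> b < c \<and> c < d \<and> d < n}. \<bar>U a b c d\<bar> *
      ((if a = i then x b + x c + x d else 0) + (if b = i then x a + x c + x d else 0)
         + (if c = i then x a + x b + x d else 0) + (if d = i then x a + x b + x c else 0)))"
    by (simp only: sum_distrib_left split_def mult.left_commute)
  also have "\<dots> = majorana_rate n t U x i"
    unfolding majorana_rate_def sum_sorted_pairs_incident[OF t i] sum_sorted_quadruples_incident[OF U i]
    by simp
  finally show ?thesis unfolding x_def .
qed

theorem norm_anticommutator_heisenberg_le:
  assumes t: "antisym2 t" and U: "antisym4 U" and m: "m < n"
    and ode: "\<And>s i. s \<ge> 0 \<Longrightarrow> i < n \<Longrightarrow>
      ((\<lambda>r. c r i) has_real_derivative majorana_rate n t U (c s) i) (at s within {0..})"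
    and init: "\<And>i. i < n \<Longrightarrow> c 0 i = (if i = m then 2 else 0)"
    and "s \<ge> 0" "i < n"
  shows "norm (anticommutator (heisenberg s (C i)) (C m)) \<le> c s i"
proof (rule norm_le_comparison[where F = "majorana_rate n t U"
      and X = "\<lambda>s i. anticommutator (heisenberg s (C i)) (C m)"
      and X' = "\<lambda>s i. anticommutator (heisenberg s (commutator (imag_unit * H) (C i))) (C m)"])
  show "((\<lambda>r. anticommutator (heisenberg r (C i)) (C m)) has_vector_derivative
      anticommutator (heisenberg s (commutator (imag_unit * H) (C i))) (C m)) (at s)" for s i
    by (rule has_vector_derivative_anticommutator_heisenberg)
  show "norm (anticommutator (heisenberg s (commutator (imag_unit * H) (C i))) (C m))
      \<le> majorana_rate n t U (\<lambda>j. norm (anticommutator (heisenberg s (C j)) (C m))) i" if "i < n" for s i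
    using norm_anticommutator_heisenberg_commutator_le[OF t U that imag_unit_commute_C]
    unfolding anticomm_norm_def .
  show "norm (anticommutator (heisenberg 0 (C i)) (C m)) \<le> c 0 i" if "i < n" for i
    using init[OF that] by (simp add: heisenberg_0 anticommutator_C[OF that m])
qed (use assms majorana_rate_mono majorana_rate_shift in auto)

end

lemma endo_of_matrix_anticomm:
  "endo_of_matrix (anticomm A B) = anticommutator (endo_of_matrix A) (endo_of_matrix B)"
  by (simp add: anticomm_def anticommutator_def endo_of_matrix_add endo_of_matrix_mult)

lemma majorana_hamiltonian_of_matrices:
  assumes "majorana n cop"
  shows "majorana_hamiltonian n (\<lambda>i. endo_of_matrix (cop i))"
proof
  fix i j assume "i < n" "j < n"
  then show "anticommutator (endo_of_matrix (cop i)) (endo_of_matrix (cop j)) = (if i = j then 2 else 0)"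
    using assms unfolding majorana_def
    by (auto simp flip: endo_of_matrix_anticomm simp: endo_of_matrix_mat2 endo_of_matrix_zero)
next
  fix i assume "i < n"
  then show "has_adjoint (endo_of_matrix (cop i)) (endo_of_matrix (cop i))"
    using assms has_adjoint_endo_of_matrix[of "cop i"] unfolding majorana_def by simp
qed (rule imag_unit_commute_endo_of_matrix)

lemma endo_of_matrix_hamiltonian:
  assumes "majorana n cop"
  shows "endo_of_matrix (hamiltonian n cop t U) = majorana_hamiltonian.H n (\<lambda>i. endo_of_matrix (cop i)) t U"
  unfolding hamiltonian_def majorana_hamiltonian.H_def[OF majorana_hamiltonian_of_matrices[OF assms]]
  by (simp add: endo_of_matrix_add endo_of_matrix_sum case_prod_beta msc_mult endo_of_matrix_msc_of_real
      endo_of_matrix_msc_imag endo_of_matrix_mult)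

theorem mainTheorem2:
  fixes n :: nat
    and cop :: "nat \<Rightarrow> complex^'d^'d"
    and t :: "nat \<Rightarrow> nat \<Rightarrow> real"
    and U :: "nat \<Rightarrow> nat \<Rightarrow> nat \<Rightarrow> nat \<Rightarrow> real"
    and m :: nat
    and c :: "real \<Rightarrow> nat \<Rightarrow> real"
  assumes maj: "majorana n cop"
    and t_anti: "antisym2 t"
    and U_anti: "antisym4 U"
    and m_lt: "m < n"
    and ode: "\<And>s i. s \<ge> 0 \<Longrightarrow> i < n \<Longrightarrow>
      ((\<lambda>r. c r i) has_real_derivative
         (2 * (\<Sum>(j,k,l)\<in>{(j,k,l). j < k \<and> k < l \<and> l < n \<and> j \<noteq> i \<and> k \<noteq> i \<and> l \<noteq> i}.
                 \<bar>U i j k l\<bar> * (c s j + c s k + c s l))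
          + 2 * (\<Sum>j<n. \<bar>t i j\<bar> * c s j))) (at s within {0..})"
    and init: "\<And>i. i < n \<Longrightarrow> c 0 i = (if i = m then 2 else 0)"
  shows "\<forall>s\<ge>0. \<forall>i<n.
    opnorm (anticomm (heis (hamiltonian n cop t U) s (cop i)) (cop m)) \<le> c s i"
proof (intro allI impI)
  fix s :: real and i
  assume "s \<ge> 0" "i < n"
  interpret majorana_hamiltonian n "\<lambda>i. endo_of_matrix (cop i)" t U
    using maj by (rule majorana_hamiltonian_of_matrices)
  have "norm (anticommutator (heisenberg s (endo_of_matrix (cop i))) (endo_of_matrix (cop m))) \<le> c s i"
    using t_anti U_anti m_lt ode init \<open>s \<ge> 0\<close> \<open>i < n\<close>
    by (rule norm_anticommutator_heisenberg_le[unfolded majorana_rate_def])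
  then show "opnorm (anticomm (heis (hamiltonian n cop t U) s (cop i)) (cop m)) \<le> c s i"
    by (simp add: opnorm_eq_norm_endo_of_matrix endo_of_matrix_anticomm endo_of_matrix_heis
        endo_of_matrix_hamiltonian[OF maj] heisenberg_def propagator_def)
qed

end
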